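(* Let $K\in\mathcal{K}$, let $K'=R^{-1}B^\top P_K$, and let $\Psi_K=(K-K')^\top R(K-K')$. If $\Psi_K=0$, then $K=K^\star$.
   Context: Let $A\in\mathbb{R}^{n\times n}$, $B\in\mathbb{R}^{n\times m}$, $C\in\mathbb{R}^{p\times n}$, $D\in\mathbb{R}^{n\times q}$, $E\in\mathbb{R}^{p\times m}$, $\gamma>0$, with $Q:=C^\top C\succ 0$, $E^\top C=0$, $R:=E^\top E\succ 0$. For $K\in\mathbb{R}^{m\times n}$ set $A_K=A-BK$, $Q_K=Q+K^\top RK$, $T_{zw}(K)(s)=(C-EK)(sI-A+BK)^{-1}D$, and $\mathcal{K}=\{K:\ A_K\text{ Hurwitz},\ \|T_{zw}(K)\|_{\mathcal{H}_\infty}<\gamma\}$, where $\|G\|_{\mathcal{H}_\infty}=\sup_{\omega\in\mathbb{R}}\bar\sigma(G(j\omega))$. For $K\in\mathcal{K}$, $P_K$ denotes the unique symmetric positive definite solution of $A_K^\top P+PA_K+Q_K+\gamma^{-2}PDD^\top P=0$ for which $A_K+\gamma^{-2}DD^\top P_K$ is Hurwitz. $P^\star$ denotes the unique symmetric positive definite (stabilizing) solution of $A^\top P+PA-P(BR^{-1}B^\top-\gamma^{-2}DD^\top)P+Q=0$, and $K^\star=R^{-1}B^\top P^\star$. *)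

theory Defs
  imports "HOL-Analysis.Analysis"
begin

definition cmat :: "real^'c^'r \<Rightarrow> complex^'c^'r" where
  "cmat M = (\<chi> i j. complex_of_real (M $ i $ j))"

text \<open>Hurwitz: every (complex) eigenvalue has negative real part, i.e.
  sI - A is singular only for Re s < 0.\<close>
definition hurwitz :: "real^'n^'n \<Rightarrow> bool" where
  "hurwitz A \<longleftrightarrow> (\<forall>s::complex. det (mat s - cmat A) = 0 \<longrightarrow> Re s < 0)"

definition pos_def :: "real^'n^'n \<Rightarrow> bool" where
  "pos_def P \<longleftrightarrow> transpose P = P \<and> (\<forall>x. x \<noteq> 0 \<longrightarrow> x \<bullet> (P *v x) > 0)"

text \<open>Largest singular value = induced Euclidean operator norm.\<close>
definition max_sv :: "complex^'c^'r \<Rightarrow> real" where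
  "max_sv G = onorm (\<lambda>x. G *v x)"

definition Tzw :: "real^'n^'n \<Rightarrow> real^'m^'n \<Rightarrow> real^'n^'p \<Rightarrow> real^'q^'n \<Rightarrow> real^'m^'p
    \<Rightarrow> real^'n^'m \<Rightarrow> complex \<Rightarrow> complex^'q^'p" where
  "Tzw A B C D E K s = cmat (C - E ** K) ** matrix_inv (mat s - cmat (A - B ** K)) ** cmat D"

definition hinf_norm :: "(complex \<Rightarrow> complex^'q^'p) \<Rightarrow> real" where
  "hinf_norm G = (SUP \<omega>::real. max_sv (G (\<i> * complex_of_real \<omega>)))"

definition Kset :: "real^'n^'n \<Rightarrow> real^'m^'n \<Rightarrow> real^'n^'p \<Rightarrow> real^'q^'n \<Rightarrow> real^'m^'p
    \<Rightarrow> real \<Rightarrow> (real^'n^'m) set" where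
  "Kset A B C D E \<gamma> = {K. hurwitz (A - B ** K) \<and> hinf_norm (Tzw A B C D E K) < \<gamma>}"

definition PK_sol :: "real^'n^'n \<Rightarrow> real^'m^'n \<Rightarrow> real^'n^'p \<Rightarrow> real^'q^'n \<Rightarrow> real^'m^'p
    \<Rightarrow> real \<Rightarrow> real^'n^'m \<Rightarrow> real^'n^'n \<Rightarrow> bool" where
  "PK_sol A B C D E \<gamma> K P \<longleftrightarrow>
     (let AK = A - B ** K;
          QK = transpose C ** C + transpose K ** (transpose E ** E) ** K
      in pos_def P \<and>
         transpose AK ** P + P ** AK + QK + (1 / \<gamma>\<^sup>2) *\<^sub>R (P ** D ** transpose D ** P) = 0 \<and>
         hurwitz (AK + (1 / \<gamma>\<^sup>2) *\<^sub>R (D ** transpose D ** P)))"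

definition P_K :: "real^'n^'n \<Rightarrow> real^'m^'n \<Rightarrow> real^'n^'p \<Rightarrow> real^'q^'n \<Rightarrow> real^'m^'p
    \<Rightarrow> real \<Rightarrow> real^'n^'m \<Rightarrow> real^'n^'n" where
  "P_K A B C D E \<gamma> K = (THE P. PK_sol A B C D E \<gamma> K P)"

definition Pstar_sol :: "real^'n^'n \<Rightarrow> real^'m^'n \<Rightarrow> real^'n^'p \<Rightarrow> real^'q^'n \<Rightarrow> real^'m^'p
    \<Rightarrow> real \<Rightarrow> real^'n^'n \<Rightarrow> bool" where
  "Pstar_sol A B C D E \<gamma> P \<longleftrightarrow>
     (let R = transpose E ** E;
          S = B ** matrix_inv R ** transpose B - (1 / \<gamma>\<^sup>2) *\<^sub>R (D ** transpose D)
      in pos_def P \<and>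
         transpose A ** P + P ** A - P ** S ** P + transpose C ** C = 0 \<and>
         hurwitz (A - S ** P))"

definition P_star :: "real^'n^'n \<Rightarrow> real^'m^'n \<Rightarrow> real^'n^'p \<Rightarrow> real^'q^'n \<Rightarrow> real^'m^'p
    \<Rightarrow> real \<Rightarrow> real^'n^'n" where
  "P_star A B C D E \<gamma> = (THE P. Pstar_sol A B C D E \<gamma> P)"

definition K_star :: "real^'n^'n \<Rightarrow> real^'m^'n \<Rightarrow> real^'n^'p \<Rightarrow> real^'q^'n \<Rightarrow> real^'m^'p
    \<Rightarrow> real \<Rightarrow> real^'n^'m" where
  "K_star A B C D E \<gamma> = matrix_inv (transpose E ** E) ** transpose B ** P_star A B C D E \<gamma>"

end

theory Submission
  imports Defs
begin

text \<open>If \<open>\<Psi>\<^sub>K = 0\<close> then, \<open>R\<close> being positive definite, \<open>K = R\<^sup>-\<^sup>1 B\<^sup>T P\<^sub>K\<close>. Substituting this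
  gain into the closed-loop Riccati equation for \<open>P\<^sub>K\<close> completes the square: \<open>A\<^sub>K\<^sup>T P + P A\<^sub>K + K\<^sup>T R K\<close>
  becomes \<open>A\<^sup>T P + P A - P B R\<^sup>-\<^sup>1 B\<^sup>T P\<close>, and \<open>A\<^sub>K + \<gamma>\<^sup>-\<^sup>2 D D\<^sup>T P\<close> becomes the closed-loop matrix
  of the algebraic Riccati equation. Hence \<open>P\<^sub>K\<close> is a stabilizing positive definite solution of
  that equation, so \<open>P\<^sub>K = P\<^sup>\<star>\<close> by uniqueness, and \<open>K = R\<^sup>-\<^sup>1 B\<^sup>T P\<^sup>\<star> = K\<^sup>\<star>\<close>.\<close>

lemma matrix_diff_rdistrib: "((A::'a::ring_1^'n^'m) - B) ** C = A ** C - B ** C"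
  by (vector matrix_matrix_mult_def sum_subtractf[symmetric] field_simps)

lemma matrix_diff_ldistrib: "(A::'a::ring_1^'n^'m) ** (B - C) = A ** B - A ** C"
  by (vector matrix_matrix_mult_def sum_subtractf[symmetric] field_simps)

lemma transpose_diff: "transpose ((A::'a::ab_group_add^'n^'m) - B) = transpose A - transpose B"
  by (simp add: transpose_def vec_eq_iff)

lemma invertible_matrix_inv:
  fixes A :: "'a::semiring_1^'n^'n"
  assumes "invertible A"
  shows "A ** matrix_inv A = mat 1" and "matrix_inv A ** A = mat 1"
proof -
  have "\<exists>A'. A ** A' = mat 1 \<and> A' ** A = mat 1"
    using assms by (simp add: invertible_def)
  then have "A ** matrix_inv A = mat 1 \<and> matrix_inv A ** A = mat 1"
    unfolding matrix_inv_def by (rule someI_ex)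
  then show "A ** matrix_inv A = mat 1" and "matrix_inv A ** A = mat 1"
    by auto
qed

lemma transpose_matrix_inv_symmetric:
  fixes A :: "'a::comm_semiring_1^'n^'n"
  assumes "transpose A = A" and "invertible A"
  shows "transpose (matrix_inv A) = matrix_inv A"
proof -
  have "transpose (matrix_inv A) ** A = mat 1"
    by (metis assms invertible_matrix_inv(1) matrix_transpose_mul transpose_mat)
  have "transpose (matrix_inv A) = transpose (matrix_inv A) ** (A ** matrix_inv A)"
    by (simp add: assms(2) invertible_matrix_inv(1))
  also have "\<dots> = matrix_inv A"
    by (simp add: matrix_mul_assoc \<open>transpose (matrix_inv A) ** A = mat 1\<close>)
  finally show ?thesis .
qed

lemma pos_def_invertible:
  assumes "pos_def R"
  shows "invertible R"
proof -
  have "x = 0" if "R *v x = 0" for x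
    using assms that unfolding pos_def_def by force
  then show ?thesis
    using matrix_left_invertible_ker invertible_left_inverse by blast
qed

lemma pos_def_congruence_eq_0:
  fixes M :: "real^'n^'m" and R :: "real^'m^'m"
  assumes "pos_def R" and "transpose M ** R ** M = 0"
  shows "M = 0"
proof -
  have "M *v x = 0 *v x" for x
  proof -
    have "(M *v x) \<bullet> (R *v (M *v x)) = x \<bullet> ((transpose M ** R ** M) *v x)"
      by (metis dot_lmul_matrix inner_commute matrix_vector_mul_assoc transpose_matrix_vector)
    with assms show ?thesis
      unfolding pos_def_def by force
  qed
  then show ?thesis
    using matrix_eq by blast
qed

lemma riccati_optimal_gain:
  fixes A P Q :: "real^'n^'n" and B :: "real^'m^'n" and R :: "real^'m^'m" and D :: "real^'q^'n"
    and c :: real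
  assumes "transpose P = P" and "transpose R = R" and "invertible R"
  defines "K \<equiv> matrix_inv R ** transpose B ** P"
    and "S \<equiv> B ** matrix_inv R ** transpose B - c *\<^sub>R (D ** transpose D)"
  shows "transpose (A - B ** K) ** P + P ** (A - B ** K) + (Q + transpose K ** R ** K)
           + c *\<^sub>R (P ** D ** transpose D ** P)
         = transpose A ** P + P ** A - P ** S ** P + Q"
    and "A - B ** K + c *\<^sub>R (D ** transpose D ** P) = A - S ** P"
proof -
  define G where "G = B ** matrix_inv R ** transpose B"
  have transpose_K: "transpose K = P ** B ** matrix_inv R"
    by (simp add: K_def matrix_transpose_mul matrix_mul_assoc assms(1)
        transpose_matrix_inv_symmetric[OF assms(2,3)])
  have BK: "B ** K = G ** P"
    by (simp add: K_def G_def matrix_mul_assoc)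
  have "transpose (G ** P) = transpose K ** transpose B"
    unfolding BK[symmetric] by (rule matrix_transpose_mul)
  also have "\<dots> = P ** G"
    by (simp add: transpose_K G_def matrix_mul_assoc)
  finally have transpose_GP: "transpose (G ** P) = P ** G" .
  have "transpose K ** R = P ** B"
    using invertible_matrix_inv(2)[OF assms(3)]
    by (metis transpose_K matrix_mul_assoc matrix_mul_rid)
  then have KRK: "transpose K ** R ** K = P ** G ** P"
    by (simp add: K_def G_def matrix_mul_assoc)
  show "transpose (A - B ** K) ** P + P ** (A - B ** K) + (Q + transpose K ** R ** K)
          + c *\<^sub>R (P ** D ** transpose D ** P)
        = transpose A ** P + P ** A - P ** S ** P + Q"
    unfolding KRK BK transpose_diff transpose_GP S_def G_def[symmetric]
    by (simp add: matrix_diff_rdistrib matrix_diff_ldistrib matrix_add_ldistrib matrix_scalar_ac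
        scalar_matrix_assoc matrix_mul_assoc algebra_simps)
  show "A - B ** K + c *\<^sub>R (D ** transpose D ** P) = A - S ** P"
    unfolding BK S_def G_def[symmetric]
    by (simp add: matrix_diff_rdistrib scalar_matrix_assoc matrix_mul_assoc algebra_simps)
qed

lemma PK_sol_optimal_gain_imp_Pstar_sol:
  assumes "pos_def (transpose E ** E)"
    and "PK_sol A B C D E \<gamma> (matrix_inv (transpose E ** E) ** transpose B ** P) P"
  shows "Pstar_sol A B C D E \<gamma> P"
proof -
  have R: "transpose (transpose E ** E) = transpose E ** E" "invertible (transpose E ** E)"
    using assms(1) pos_def_invertible unfolding pos_def_def by auto
  have "transpose P = P"
    using assms(2) unfolding PK_sol_def Let_def pos_def_def by blast
  note gain = riccati_optimal_gain[where A = A and B = B and D = D and c = "1 / \<gamma>\<^sup>2", OF this R]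
  show ?thesis
    using assms(2) unfolding PK_sol_def Pstar_sol_def Let_def
      gain(1)[where Q = "transpose C ** C"] gain(2)
    by blast
qed

theorem lemma4:
  fixes A :: "real^'n^'n" and B :: "real^'m^'n" and C :: "real^'n^'p"
    and D :: "real^'q^'n" and E :: "real^'m^'p" and \<gamma> :: real
    and K :: "real^'n^'m"
  assumes "\<gamma> > 0"
    and "pos_def (transpose C ** C)"
    and "transpose E ** C = 0"
    and "pos_def (transpose E ** E)"
    and "\<exists>!P. Pstar_sol A B C D E \<gamma> P"
    and "K \<in> Kset A B C D E \<gamma>"
    and "\<exists>!P. PK_sol A B C D E \<gamma> K P"
  shows "let R = transpose E ** E;
             K' = matrix_inv R ** transpose B ** P_K A B C D E \<gamma> K;
             \<Psi> = transpose (K - K') ** R ** (K - K')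
         in \<Psi> = 0 \<longrightarrow> K = K_star A B C D E \<gamma>"
proof -
  define R where "R = transpose E ** E"
  define P where "P = P_K A B C D E \<gamma> K"
  have PK: "PK_sol A B C D E \<gamma> K P"
    unfolding P_def P_K_def using assms(7) by (rule theI')
  show ?thesis
    unfolding Let_def R_def[symmetric] P_def[symmetric]
  proof
    assume "transpose (K - matrix_inv R ** transpose B ** P) ** R
      ** (K - matrix_inv R ** transpose B ** P) = 0"
    then have K: "K = matrix_inv R ** transpose B ** P"
      using pos_def_congruence_eq_0 assms(4) unfolding R_def by fastforce
    then have "Pstar_sol A B C D E \<gamma> P"
      using PK_sol_optimal_gain_imp_Pstar_sol assms(4) PK unfolding R_def by blast
    then have "P_star A B C D E \<gamma> = P"
      unfolding P_star_def using assms(5) by (rule the1_equality[rotated])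
    then show "K = K_star A B C D E \<gamma>"
      unfolding K_star_def R_def[symmetric] K by simp
  qed
qed

end
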